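(* Let $k$ be a commutative ring, $A$ a commutative $k$-algebra and $m\ge1$ an integer or $m=\infty$. There is a well-defined $A$-linear map $\chi_m:\operatorname{Ider}_k(A;m)\to\operatorname{EXP}_m(\operatorname{gr}\operatorname{Diff}_{A/k})$ such that $\chi_m(\delta)=\Sigma_m(D)$ for every $\delta\in\operatorname{Ider}_k(A;m)$ and every $D\in\operatorname{HS}_k(A;m)$ with $D_1=\delta$.
   Context: $\operatorname{HS}_k(A;m)$: sequences $D=(D_0,\dots,D_m)$ of $k$-linear maps $A\to A$ with $D_0=\mathrm{Id}$, $D_i(xy)=\sum_{r+s=i}D_r(x)D_s(y)$; it is a group under $(D\circ D')_n=\sum_{i+j=n}D_i\circ D'_j$. $\operatorname{Ider}_k(A;m)$ is the set of $\delta\in\operatorname{Der}_k(A)$ with $\delta=D_1$ for some $D\in\operatorname{HS}_k(A;m)$. $\operatorname{gr}\operatorname{Diff}_{A/k}$ is the graded ring associated to the order filtration of the ring of $k$-linear differential operators of $A$, $\sigma_i$ the symbol maps, $\Sigma_m(D)=\sum_{i=0}^m\sigma_i(D_i)t^i$. For an $A$-algebra $B$, $\operatorname{EXP}_m(B)$ is the set of $\sum_{i=0}^mR_it^i\in B[[t]]/(t^{m+1})$ with $R_0=1$ and $\binom{i+j}{i}R_{i+j}=R_iR_j$ for $i+j\le m$; it is an $A$-module with addition = multiplication of series and $a\cdot\sum R_it^i=\sum a^iR_it^i$. *)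

theory Defs
  imports Main "HOL-Library.Extended_Nat"
begin

text \<open>The base ring k is a type 'k, the commutative k-algebra A is a type 'a,
  with structure map phi : k -> A a unital ring homomorphism.\<close>

definition ring_hom_map :: "('k::comm_ring_1 \<Rightarrow> 'a::comm_ring_1) \<Rightarrow> bool" where
  "ring_hom_map phi \<longleftrightarrow> phi 1 = 1 \<and> (\<forall>x y. phi (x + y) = phi x + phi y)
     \<and> (\<forall>x y. phi (x * y) = phi x * phi y)"

definition klin :: "('k::comm_ring_1 \<Rightarrow> 'a::comm_ring_1) \<Rightarrow> ('a \<Rightarrow> 'a) \<Rightarrow> bool" where
  "klin phi P \<longleftrightarrow> (\<forall>x y. P (x + y) = P x + P y) \<and> (\<forall>c x. P (phi c * x) = phi c * P x)"

text \<open>Hasse--Schmidt derivations of length m (m = \<infinity> allowed); components beyond m are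
  normalised to 0.\<close>
definition HS :: "('k::comm_ring_1 \<Rightarrow> 'a::comm_ring_1) \<Rightarrow> enat \<Rightarrow> (nat \<Rightarrow> 'a \<Rightarrow> 'a) \<Rightarrow> bool" where
  "HS phi m D \<longleftrightarrow> D 0 = id
     \<and> (\<forall>i. enat i \<le> m \<longrightarrow> klin phi (D i))
     \<and> (\<forall>i. enat i \<le> m \<longrightarrow> (\<forall>x y. D i (x * y) = (\<Sum>r\<le>i. D r x * D (i - r) y)))
     \<and> (\<forall>i. m < enat i \<longrightarrow> D i = (\<lambda>_. 0))"

definition Ider :: "('k::comm_ring_1 \<Rightarrow> 'a::comm_ring_1) \<Rightarrow> enat \<Rightarrow> ('a \<Rightarrow> 'a) set" where
  "Ider phi m = {\<delta>. \<exists>D. HS phi m D \<and> D 1 = \<delta>}"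

text \<open>Grothendieck differential operators: diffop phi n P means P is in Diff^n
  (order at most n).\<close>
fun diffop :: "('k::comm_ring_1 \<Rightarrow> 'a::comm_ring_1) \<Rightarrow> nat \<Rightarrow> ('a \<Rightarrow> 'a) \<Rightarrow> bool" where
  "diffop phi 0 P \<longleftrightarrow> klin phi P \<and> (\<forall>a x. P (a * x) = a * P x)"
| "diffop phi (Suc n) P \<longleftrightarrow> klin phi P \<and> (\<forall>a. diffop phi n (\<lambda>x. P (a * x) - a * P x))"

text \<open>lowerdiff phi i R: R lies in Diff^(i-1), with Diff^(-1) = 0.\<close>
fun lowerdiff :: "('k::comm_ring_1 \<Rightarrow> 'a::comm_ring_1) \<Rightarrow> nat \<Rightarrow> ('a \<Rightarrow> 'a) \<Rightarrow> bool" where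
  "lowerdiff phi 0 R \<longleftrightarrow> R = (\<lambda>_. 0)"
| "lowerdiff phi (Suc n) R \<longleftrightarrow> diffop phi n R"

text \<open>Symbol map sigma_i : Diff^i -> Diff^i / Diff^(i-1) (class as a set of operators).\<close>
definition sym :: "('k::comm_ring_1 \<Rightarrow> 'a::comm_ring_1) \<Rightarrow> nat \<Rightarrow> ('a \<Rightarrow> 'a) \<Rightarrow> ('a \<Rightarrow> 'a) set" where
  "sym phi i P = {Q. diffop phi i Q \<and> lowerdiff phi i (\<lambda>x. Q x - P x)}"

definition rep :: "('a \<Rightarrow> 'a) set \<Rightarrow> ('a \<Rightarrow> 'a)" where
  "rep X = (SOME P. P \<in> X)"

text \<open>Elements of gr Diff = direct sum of Diff^i/Diff^(i-1): families of classes,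
  almost all zero.\<close>
type_synonym 'a grd = "nat \<Rightarrow> ('a \<Rightarrow> 'a) set"

definition gr_zero :: "('k::comm_ring_1 \<Rightarrow> 'a::comm_ring_1) \<Rightarrow> 'a grd" where
  "gr_zero phi = (\<lambda>i. sym phi i (\<lambda>_. 0))"

definition grD :: "('k::comm_ring_1 \<Rightarrow> 'a::comm_ring_1) \<Rightarrow> 'a grd set" where
  "grD phi = {g. (\<forall>i. \<exists>P. diffop phi i P \<and> g i = sym phi i P)
                 \<and> finite {i. g i \<noteq> gr_zero phi i}}"

definition gr_one :: "('k::comm_ring_1 \<Rightarrow> 'a::comm_ring_1) \<Rightarrow> 'a grd" where
  "gr_one phi = (\<lambda>i. sym phi i (if i = 0 then id else (\<lambda>_. 0)))"

definition gr_mult :: "('k::comm_ring_1 \<Rightarrow> 'a::comm_ring_1) \<Rightarrow> 'a grd \<Rightarrow> 'a grd \<Rightarrow> 'a grd" where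
  "gr_mult phi g h = (\<lambda>l. sym phi l (\<lambda>x. \<Sum>i\<le>l. rep (g i) (rep (h (l - i)) x)))"

definition gr_nsmul :: "('k::comm_ring_1 \<Rightarrow> 'a::comm_ring_1) \<Rightarrow> nat \<Rightarrow> 'a grd \<Rightarrow> 'a grd" where
  "gr_nsmul phi c g = (\<lambda>l. sym phi l (\<lambda>x. of_nat c * rep (g l) x))"

definition gr_scal :: "('k::comm_ring_1 \<Rightarrow> 'a::comm_ring_1) \<Rightarrow> 'a \<Rightarrow> 'a grd \<Rightarrow> 'a grd" where
  "gr_scal phi a g = (\<lambda>l. sym phi l (\<lambda>x. a * rep (g l) x))"

definition gr_hom :: "('k::comm_ring_1 \<Rightarrow> 'a::comm_ring_1) \<Rightarrow> nat \<Rightarrow> ('a \<Rightarrow> 'a) \<Rightarrow> 'a grd" where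
  "gr_hom phi i P = (\<lambda>l. if l = i then sym phi i P else sym phi l (\<lambda>_. 0))"

text \<open>Truncated series in B[[t]]/(t^(m+1)), B = gr Diff, as coefficient sequences with
  coefficients beyond m normalised to 0.\<close>
definition EXP :: "('k::comm_ring_1 \<Rightarrow> 'a::comm_ring_1) \<Rightarrow> enat \<Rightarrow> (nat \<Rightarrow> 'a grd) set" where
  "EXP phi m = {R. (\<forall>i. R i \<in> grD phi) \<and> (\<forall>i. m < enat i \<longrightarrow> R i = gr_zero phi)
      \<and> R 0 = gr_one phi
      \<and> (\<forall>i j. enat (i + j) \<le> m \<longrightarrow>
            gr_nsmul phi ((i + j) choose i) (R (i + j)) = gr_mult phi (R i) (R j))}"

text \<open>Addition in EXP_m: product of truncated series.\<close>
definition EXP_add :: "('k::comm_ring_1 \<Rightarrow> 'a::comm_ring_1) \<Rightarrow> enat \<Rightarrow> (nat \<Rightarrow> 'a grd) \<Rightarrow> (nat \<Rightarrow> 'a grd) \<Rightarrow> (nat \<Rightarrow> 'a grd)" where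
  "EXP_add phi m R S = (\<lambda>n. if enat n \<le> m then
       (\<lambda>l. sym phi l (\<lambda>x. \<Sum>i\<le>n. rep (gr_mult phi (R i) (S (n - i)) l) x))
     else gr_zero phi)"

definition EXP_scal :: "('k::comm_ring_1 \<Rightarrow> 'a::comm_ring_1) \<Rightarrow> 'a \<Rightarrow> (nat \<Rightarrow> 'a grd) \<Rightarrow> (nat \<Rightarrow> 'a grd)" where
  "EXP_scal phi a R = (\<lambda>n. gr_scal phi (a ^ n) (R n))"

definition SigmaD :: "('k::comm_ring_1 \<Rightarrow> 'a::comm_ring_1) \<Rightarrow> enat \<Rightarrow> (nat \<Rightarrow> 'a \<Rightarrow> 'a) \<Rightarrow> (nat \<Rightarrow> 'a grd)" where
  "SigmaD phi m D = (\<lambda>i. if enat i \<le> m then gr_hom phi i (D i) else gr_zero phi)"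

end

theory Submission
  imports Defs
begin

(* For a Hasse--Schmidt derivation D, the Leibniz rule
   says that [D_(k+1), a] = D_1(a) D_k + (terms of order < k).  From this, by induction
   on the order, (1) D_i is a differential operator of order <= i, (2) its symbol
   sigma_i(D_i) only depends on D_1, and (3) D_i D_j = binom(i+j, i) D_(i+j) modulo lower
   order.  Hence Sigma_m(D) only depends on D_1 and lies in EXP_m.  Finally, Sigma_m turns
   the group law and A-action of HS(A;m) into those of EXP_m, which transfers to chi_m. *)

abbreviation commutator :: "('a::comm_ring_1 \<Rightarrow> 'a) \<Rightarrow> 'a \<Rightarrow> 'a \<Rightarrow> 'a" where
  "commutator P a \<equiv> (\<lambda>x. P (a * x) - a * P x)"

lemma klin_zero_at: "klin phi P \<Longrightarrow> P 0 = 0"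
  unfolding klin_def by (metis add_cancel_right_right add_0)

lemma klin_add_at: "klin phi P \<Longrightarrow> P (x + y) = P x + P y"
  unfolding klin_def by simp

lemma klin_diff_at: "klin phi P \<Longrightarrow> P (x - y) = P x - P y"
  unfolding klin_def by (metis eq_diff_eq)

lemma klin_sum_at: "klin phi P \<Longrightarrow> P (\<Sum>i\<in>S. g i) = (\<Sum>i\<in>S. P (g i))"
  by (induction S rule: infinite_finite_induct) (auto simp: klin_zero_at klin_def)

lemma klin_zero: "klin phi (\<lambda>_. 0)"
  and klin_id: "klin phi (\<lambda>x. x)"
  by (simp_all add: klin_def)

lemma klin_add: "klin phi P \<Longrightarrow> klin phi Q \<Longrightarrow> klin phi (\<lambda>x. P x + Q x)"
  and klin_diff: "klin phi P \<Longrightarrow> klin phi Q \<Longrightarrow> klin phi (\<lambda>x. P x - Q x)"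
  and klin_scal: "klin phi P \<Longrightarrow> klin phi (\<lambda>x. b * P x)"
  and klin_comp: "klin phi P \<Longrightarrow> klin phi Q \<Longrightarrow> klin phi (\<lambda>x. P (Q x))"
  by (simp_all add: klin_def algebra_simps)

lemma klin_sum: "(\<And>i. i \<in> S \<Longrightarrow> klin phi (f i)) \<Longrightarrow> klin phi (\<lambda>x. \<Sum>i\<in>S. f i x)"
  by (simp add: klin_def sum.distrib sum_distrib_left)

lemma diffop_klin: "diffop phi n P \<Longrightarrow> klin phi P"
  by (cases n) auto

lemma diffop_zero: "diffop phi n (\<lambda>_. 0)"
  by (induction n) (auto simp: klin_zero)

lemma diffop_id: "diffop phi 0 (\<lambda>x. x)"
  by (simp add: klin_id)

lemma diffop_lincomb:
  "diffop phi n P \<Longrightarrow> diffop phi n Q \<Longrightarrow> diffop phi n (\<lambda>x. b * P x + c * Q x)"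
proof (induction n arbitrary: P Q)
  case 0 then show ?case by (auto simp: klin_add klin_scal algebra_simps)
next
  case (Suc n)
  have "diffop phi n (\<lambda>x. b * commutator P a x + c * commutator Q a x)" for a
    using Suc by auto
  then show ?case using Suc.prems by (auto simp: klin_add klin_scal algebra_simps)
qed

lemma diffop_add: "diffop phi n P \<Longrightarrow> diffop phi n Q \<Longrightarrow> diffop phi n (\<lambda>x. P x + Q x)"
  and diffop_diff: "diffop phi n P \<Longrightarrow> diffop phi n Q \<Longrightarrow> diffop phi n (\<lambda>x. P x - Q x)"
  and diffop_scal: "diffop phi n P \<Longrightarrow> diffop phi n (\<lambda>x. b * P x)"
  using diffop_lincomb[of phi n P Q 1 1] diffop_lincomb[of phi n P Q 1 "-1"]
    diffop_lincomb[of phi n P "\<lambda>_. 0" b 0] diffop_zero[of phi n]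
  by simp_all

lemma diffop_sum: "(\<And>i. i \<in> S \<Longrightarrow> diffop phi n (f i)) \<Longrightarrow> diffop phi n (\<lambda>x. \<Sum>i\<in>S. f i x)"
  by (induction S rule: infinite_finite_induct) (auto simp: diffop_zero diffop_add)

lemma diffop_Suc: "diffop phi n P \<Longrightarrow> diffop phi (Suc n) P"
proof (induction n arbitrary: P)
  case 0 then show ?case by (simp add: diffop_zero)
next
  case (Suc n) then show ?case by (subst diffop.simps(2)) auto
qed

lemma diffop_mono: "n \<le> n' \<Longrightarrow> diffop phi n P \<Longrightarrow> diffop phi n' P"
  by (induction n' rule: dec_induct) (auto intro: diffop_Suc simp del: diffop.simps)

(* Composition adds orders: [P Q, a] = [P, a] Q + P [Q, a], and induction on p + q. *)
lemma diffop_comp: "diffop phi p P \<Longrightarrow> diffop phi q Q \<Longrightarrow> diffop phi (p + q) (\<lambda>x. P (Q x))"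
proof (induction "p + q" arbitrary: p q P Q)
  case 0 then show ?case by (auto simp: klin_comp)
next
  case (Suc N)
  have kP: "klin phi P" and kQ: "klin phi Q" using Suc.prems diffop_klin by auto
  have left: "diffop phi N (\<lambda>x. commutator P a (Q x))" for a
  proof (cases p)
    case 0 then show ?thesis using Suc.prems by (simp add: diffop_zero)
  next
    case (Suc p')
    then show ?thesis using Suc.hyps(1)[of p' q "commutator P a" Q] Suc.hyps(2) Suc.prems by auto
  qed
  have right: "diffop phi N (\<lambda>x. P (commutator Q a x))" for a
  proof (cases q)
    case 0 then show ?thesis using Suc.prems kP by (simp add: diffop_zero klin_zero_at)
  next
    case (Suc q')
    then show ?thesis using Suc.hyps(1)[of p q' P "commutator Q a"] Suc.hyps(2) Suc.prems by auto
  qed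
  have "commutator (\<lambda>x. P (Q x)) a = (\<lambda>x. commutator P a (Q x) + P (commutator Q a x))" for a
    by (simp add: klin_diff_at[OF kP])
  then show ?case
    using diffop_add[OF left right] klin_comp[OF kP kQ] Suc.hyps(2)[symmetric] by simp
qed

(* lowerdiff n is Diff^(n-1), with Diff^(-1) = 0.  Its recursive description through
   commutators is uniform in n and drives all inductions on the order below. *)
lemma lowerdiff_Suc_iff:
  "lowerdiff phi (Suc n) P \<longleftrightarrow> klin phi P \<and> (\<forall>a. lowerdiff phi n (commutator P a))"
  by (cases n) (auto simp: fun_eq_iff)

lemma diffop_lowerdiff: "diffop phi p P \<Longrightarrow> p < n \<Longrightarrow> lowerdiff phi n P"
  by (cases n) (auto intro: diffop_mono[of p])

lemma diffop_commutator: "diffop phi p P \<Longrightarrow> lowerdiff phi p (commutator P a)"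
  by (cases p) auto

lemma lowerdiff_zero: "lowerdiff phi n (\<lambda>_. 0)"
  by (cases n) (auto simp: diffop_zero)

lemma lowerdiff_add: "lowerdiff phi n P \<Longrightarrow> lowerdiff phi n Q \<Longrightarrow> lowerdiff phi n (\<lambda>x. P x + Q x)"
  and lowerdiff_diff: "lowerdiff phi n P \<Longrightarrow> lowerdiff phi n Q \<Longrightarrow> lowerdiff phi n (\<lambda>x. P x - Q x)"
  and lowerdiff_scal: "lowerdiff phi n P \<Longrightarrow> lowerdiff phi n (\<lambda>x. b * P x)"
  by (cases n; auto simp: diffop_add diffop_diff diffop_scal)+

lemma lowerdiff_sum:
  "(\<And>i. i \<in> S \<Longrightarrow> lowerdiff phi n (f i)) \<Longrightarrow> lowerdiff phi n (\<lambda>x. \<Sum>i\<in>S. f i x)"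
  by (induction S rule: infinite_finite_induct) (auto simp: lowerdiff_zero lowerdiff_add)

lemma lowerdiff_comp_left:
  "lowerdiff phi p P \<Longrightarrow> diffop phi q Q \<Longrightarrow> lowerdiff phi (p + q) (\<lambda>x. P (Q x))"
  by (cases p) (auto simp: lowerdiff_zero diffop_comp)

lemma lowerdiff_comp_right:
  "diffop phi p P \<Longrightarrow> lowerdiff phi q Q \<Longrightarrow> lowerdiff phi (p + q) (\<lambda>x. P (Q x))"
  using diffop_comp[of phi p P] klin_zero_at[OF diffop_klin, of phi p P]
  by (cases q) (auto simp: lowerdiff_zero)

(* Composition respects congruence modulo lower order: this is why the product of
   gr Diff is well defined on symbols. *)
lemma lowerdiff_comp_congr:
  assumes "diffop phi p P" "diffop phi q V"
    and "lowerdiff phi p (\<lambda>x. U x - P x)" "lowerdiff phi q (\<lambda>x. V x - Q x)"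
  shows "lowerdiff phi (p + q) (\<lambda>x. U (V x) - P (Q x))"
proof -
  have "(\<lambda>x. U (V x) - P (Q x)) = (\<lambda>x. (U (V x) - P (V x)) + P (V x - Q x))"
    using klin_diff_at[OF diffop_klin[OF assms(1)]] by simp
  then show ?thesis
    using lowerdiff_add[OF lowerdiff_comp_left[OF assms(3,2)] lowerdiff_comp_right[OF assms(1,4)]]
    by simp
qed

lemma sym_eq: "lowerdiff phi n (\<lambda>x. X x - Y x) \<Longrightarrow> sym phi n X = sym phi n Y"
proof -
  assume XY: "lowerdiff phi n (\<lambda>x. X x - Y x)"
  have "lowerdiff phi n (\<lambda>x. Q x - X x) \<longleftrightarrow> lowerdiff phi n (\<lambda>x. Q x - Y x)" for Q
    using lowerdiff_add[OF _ XY, of "\<lambda>x. Q x - X x"] lowerdiff_diff[OF _ XY, of "\<lambda>x. Q x - Y x"]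
    by auto
  then show ?thesis unfolding sym_def by auto
qed

lemma rep_sym:
  assumes "diffop phi n X"
  shows "diffop phi n (rep (sym phi n X)) \<and> lowerdiff phi n (\<lambda>x. rep (sym phi n X) x - X x)"
proof -
  have "X \<in> sym phi n X" using assms lowerdiff_zero[of phi n] by (simp add: sym_def)
  then have "rep (sym phi n X) \<in> sym phi n X" unfolding rep_def by (rule someI[of "\<lambda>P. P \<in> sym phi n X"])
  then show ?thesis by (simp add: sym_def)
qed

lemma sym_sum_congr:
  assumes "\<And>i. i \<in> S \<Longrightarrow> lowerdiff phi n (\<lambda>x. F i x - G i x)"
  shows "sym phi n (\<lambda>x. \<Sum>i\<in>S. F i x) = sym phi n (\<lambda>x. \<Sum>i\<in>S. G i x)"
  using lowerdiff_sum[of S phi n "\<lambda>i x. F i x - G i x", OF assms]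
  by (intro sym_eq) (simp add: sum_subtractf)

lemma gr_hom_apply: "gr_hom phi i P l = sym phi l (if l = i then P else (\<lambda>_. 0))"
  by (simp add: gr_hom_def)

lemma diffop_if: "diffop phi i P \<Longrightarrow> diffop phi l (if l = i then P else (\<lambda>_. 0))"
  by (simp add: diffop_zero)

lemma rep_gr_hom:
  "diffop phi i P \<Longrightarrow> diffop phi l (rep (gr_hom phi i P l))
     \<and> lowerdiff phi l (\<lambda>x. rep (gr_hom phi i P l) x - (if l = i then P else (\<lambda>_. 0)) x)"
  unfolding gr_hom_apply by (rule rep_sym[OF diffop_if])

lemma gr_hom_eq: "lowerdiff phi i (\<lambda>x. P x - Q x) \<Longrightarrow> gr_hom phi i P = gr_hom phi i Q"
  unfolding gr_hom_def using sym_eq by fastforce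

lemma gr_mult_hom:
  assumes P: "diffop phi i P" and Q: "diffop phi j Q"
  shows "gr_mult phi (gr_hom phi i P) (gr_hom phi j Q) = gr_hom phi (i + j) (\<lambda>x. P (Q x))"
proof
  fix l
  define U where "U = (\<lambda>i'. rep (gr_hom phi i P i'))"
  define V where "V = (\<lambda>j'. rep (gr_hom phi j Q j'))"
  define H where "H = (\<lambda>i' x. (if i' = i then P else (\<lambda>_. 0)) ((if l - i' = j then Q else (\<lambda>_. 0)) x))"
  have "lowerdiff phi l (\<lambda>x. U i' (V (l - i') x) - H i' x)" if "i' \<in> {..l}" for i'
  proof -
    have "lowerdiff phi (i' + (l - i')) (\<lambda>x. U i' (V (l - i') x) - H i' x)"
      unfolding U_def V_def H_def
      by (rule lowerdiff_comp_congr[OF diffop_if[OF P] conjunct1[OF rep_gr_hom[OF Q]]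
            conjunct2[OF rep_gr_hom[OF P]] conjunct2[OF rep_gr_hom[OF Q]]])
    moreover have "i' + (l - i') = l" using that by simp
    ultimately show ?thesis by (simp only:)
  qed
  then have "gr_mult phi (gr_hom phi i P) (gr_hom phi j Q) l = sym phi l (\<lambda>x. \<Sum>i'\<le>l. H i' x)"
    unfolding gr_mult_def U_def V_def by (rule sym_sum_congr)
  also have "(\<lambda>x. \<Sum>i'\<le>l. H i' x) = (if l = i + j then (\<lambda>x. P (Q x)) else (\<lambda>_. 0))"
  proof
    fix x
    have "H i' x = (if i' = i then (if l = i + j then P (Q x) else 0) else 0)" if "i' \<le> l" for i'
      using that klin_zero_at[OF diffop_klin[OF P]] by (auto simp: H_def)
    then have "(\<Sum>i'\<le>l. H i' x) = (\<Sum>i'\<le>l. if i' = i then (if l = i + j then P (Q x) else 0) else 0)"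
      by (intro sum.cong) auto
    then show "(\<Sum>i'\<le>l. H i' x) = (if l = i + j then (\<lambda>x. P (Q x)) else (\<lambda>_. 0)) x"
      by simp
  qed
  finally show "gr_mult phi (gr_hom phi i P) (gr_hom phi j Q) l = gr_hom phi (i + j) (\<lambda>x. P (Q x)) l"
    by (simp only: gr_hom_apply[of phi "i + j"])
qed

lemma sym_scal_rep:
  "diffop phi l H \<Longrightarrow> sym phi l (\<lambda>x. b * rep (sym phi l H) x) = sym phi l (\<lambda>x. b * H x)"
  using lowerdiff_scal[OF conjunct2[OF rep_sym], of phi l H b]
  by (intro sym_eq) (simp add: algebra_simps)

lemma gr_scal_hom: "diffop phi n P \<Longrightarrow> gr_scal phi b (gr_hom phi n P) = gr_hom phi n (\<lambda>x. b * P x)"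
  unfolding gr_scal_def gr_hom_apply
  by (rule ext) (simp add: sym_scal_rep[OF diffop_if] if_distrib[of "\<lambda>f x. b * f x"])

lemma gr_nsmul_hom:
  "diffop phi n P \<Longrightarrow> gr_nsmul phi c (gr_hom phi n P) = gr_hom phi n (\<lambda>x. of_nat c * P x)"
  using gr_scal_hom[of phi n P "of_nat c"] unfolding gr_scal_def gr_nsmul_def by simp

lemma gr_scal_zero: "gr_scal phi b (gr_zero phi) = gr_zero phi"
  unfolding gr_scal_def gr_zero_def using sym_scal_rep[OF diffop_zero, of phi _ b] by simp

lemma gr_hom_grD: "diffop phi n P \<Longrightarrow> gr_hom phi n P \<in> grD phi"
proof -
  assume P: "diffop phi n P"
  have "{l. gr_hom phi n P l \<noteq> gr_zero phi l} \<subseteq> {n}"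
    unfolding gr_hom_def gr_zero_def by auto
  then have "finite {l. gr_hom phi n P l \<noteq> gr_zero phi l}"
    using finite_subset by blast
  then show ?thesis
    unfolding grD_def using diffop_if[OF P] gr_hom_apply by blast
qed

lemma gr_zero_grD: "gr_zero phi \<in> grD phi"
  unfolding grD_def gr_zero_def by (auto intro: diffop_zero)

lemma HS_D0: "HS phi m D \<Longrightarrow> D 0 x = x"
  unfolding HS_def by simp

lemma HS_klin: "HS phi m D \<Longrightarrow> klin phi (D i)"
  unfolding HS_def by (metis klin_zero not_le)

lemma HS_vanish: "HS phi m D \<Longrightarrow> \<not> enat i \<le> m \<Longrightarrow> D i = (\<lambda>_. 0)"
  unfolding HS_def by (simp add: not_le)

lemma HS_leibniz: "HS phi m D \<Longrightarrow> enat i \<le> m \<Longrightarrow> D i (x * y) = (\<Sum>r\<le>i. D r x * D (i - r) y)"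
  unfolding HS_def by simp

lemma HS_commutator:
  "HS phi m D \<Longrightarrow> enat (Suc k) \<le> m \<Longrightarrow>
     commutator (D (Suc k)) a x = (\<Sum>r\<le>k. D (Suc r) a * D (k - r) x)"
  by (simp add: HS_leibniz sum.atMost_Suc_shift HS_D0 del: sum.atMost_Suc)

lemma HS_diffop:
  assumes H: "HS phi m D"
  shows "diffop phi i (D i)"
proof (induction i rule: less_induct)
  case (less i)
  show ?case
  proof (cases i)
    case 0 then show ?thesis using HS_D0[OF H] diffop_id[of phi] by (simp add: id_def)
  next
    case (Suc k)
    show ?thesis
    proof (cases "enat i \<le> m")
      case False then show ?thesis using HS_vanish[OF H False] diffop_zero by metis
    next
      case True
      have "diffop phi k (D (k - r))" if "r \<le> k" for r
        using diffop_mono[OF _ less.IH[of "k - r"]] Suc that by simp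
      then have "diffop phi k (\<lambda>x. \<Sum>r\<le>k. D (Suc r) a * D (k - r) x)" for a
        by (intro diffop_sum diffop_scal) auto
      then show ?thesis
        using HS_klin[OF H] HS_commutator[OF H] True Suc by simp
    qed
  qed
qed

lemma HS_commutator_leading:
  assumes H: "HS phi m D" and le: "enat (Suc k) \<le> m"
  shows "lowerdiff phi k (\<lambda>x. commutator (D (Suc k)) a x - D 1 a * D k x)"
proof -
  have "commutator (D (Suc k)) a x - D 1 a * D k x
      = (\<Sum>r\<in>{..k} - {0}. D (Suc r) a * D (k - r) x)" for x
    using HS_commutator[OF H le] sum.remove[of "{..k}" 0 "\<lambda>r. D (Suc r) a * D (k - r) x"] by simp
  moreover have "lowerdiff phi k (\<lambda>x. \<Sum>r\<in>{..k} - {0}. D (Suc r) a * D (k - r) x)"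
    by (intro lowerdiff_sum lowerdiff_scal diffop_lowerdiff[OF HS_diffop[OF H]]) auto
  ultimately show ?thesis by simp
qed

(* Key well-definedness fact: the symbol of D_i depends only on D_1.  By induction on i,
   [D_i - D'_i, a] = D_1(a) (D_(i-1) - D'_(i-1)) modulo Diff^(i-2). *)
lemma HS_symbol_unique:
  assumes H: "HS phi m D" and H': "HS phi m D'" and D1: "D 1 = D' 1"
  shows "lowerdiff phi i (\<lambda>x. D i x - D' i x)"
proof (induction i)
  case 0 then show ?case using HS_D0[OF H] HS_D0[OF H'] by simp
next
  case (Suc k)
  show ?case
  proof (cases "enat (Suc k) \<le> m")
    case False
    then show ?thesis using HS_vanish[OF H False] HS_vanish[OF H' False] by (simp add: diffop_zero)
  next
    case True
    show ?thesis unfolding lowerdiff_Suc_iff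
    proof (intro conjI allI)
      show "klin phi (\<lambda>x. D (Suc k) x - D' (Suc k) x)"
        using HS_klin[OF H] HS_klin[OF H'] by (rule klin_diff)
      fix a
      have "commutator (\<lambda>x. D (Suc k) x - D' (Suc k) x) a =
          (\<lambda>x. (commutator (D (Suc k)) a x - D 1 a * D k x)
             - (commutator (D' (Suc k)) a x - D' 1 a * D' k x) + D 1 a * (D k x - D' k x))"
        using D1 by (simp add: algebra_simps)
      then show "lowerdiff phi k (commutator (\<lambda>x. D (Suc k) x - D' (Suc k) x) a)"
        using lowerdiff_add[OF lowerdiff_diff[OF HS_commutator_leading[OF H True]
              HS_commutator_leading[OF H' True]] lowerdiff_scal[OF Suc.IH]]
        by simp
    qed
  qed
qed

lemma HS_commutator_comp:
  assumes H: "HS phi m D" and le: "enat (Suc i + Suc j) \<le> m"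
  shows "lowerdiff phi (Suc (i + j)) (\<lambda>x. commutator (\<lambda>y. D (Suc i) (D (Suc j) y)) a x
           - D 1 a * (D i (D (Suc j) x) + D (Suc i) (D j x)))"
proof -
  define b where "b = D 1 a"
  define G where "G = (\<lambda>k x. commutator (D (Suc k)) a x - b * D k x)"
  have lei: "enat (Suc i) \<le> m" and lej: "enat (Suc j) \<le> m"
    using le by (simp_all add: order.trans[OF _ le])
  have kI: "klin phi (D (Suc i))" using HS_klin[OF H] .
  have eq: "(\<lambda>x. commutator (\<lambda>y. D (Suc i) (D (Suc j) y)) a x
          - b * (D i (D (Suc j) x) + D (Suc i) (D j x)))
      = (\<lambda>x. D (Suc i) (G j x) + commutator (D (Suc i)) b (D j x) + G i (D (Suc j) x))"
    by (simp add: G_def klin_add_at[OF kI] klin_diff_at[OF kI] algebra_simps)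
  have t1: "lowerdiff phi (Suc (i + j)) (\<lambda>x. D (Suc i) (G j x))"
    using lowerdiff_comp_right[OF HS_diffop[OF H, of "Suc i"] HS_commutator_leading[OF H lej, of a]]
    by (simp add: G_def b_def)
  have t2: "lowerdiff phi (Suc (i + j)) (\<lambda>x. commutator (D (Suc i)) b (D j x))"
    using lowerdiff_comp_left[OF diffop_commutator[OF HS_diffop[OF H, of "Suc i"], of b] HS_diffop[OF H, of j]]
    by simp
  have t3: "lowerdiff phi (Suc (i + j)) (\<lambda>x. G i (D (Suc j) x))"
    using lowerdiff_comp_left[OF HS_commutator_leading[OF H lei, of a] HS_diffop[OF H, of "Suc j"]]
    by (simp add: G_def b_def)
  from lowerdiff_add[OF lowerdiff_add[OF t1 t2] t3] have "lowerdiff phi (Suc (i + j))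
      (\<lambda>x. commutator (\<lambda>y. D (Suc i) (D (Suc j) y)) a x - b * (D i (D (Suc j) x) + D (Suc i) (D j x)))"
    unfolding eq .
  then show ?thesis by (simp only: b_def)
qed

(* Inductive step of the divided-power relation: the commutator of
   D_(i+1) D_(j+1) - binom(i+j+2, i+1) D_(i+j+2) with a reduces, by the two commutator
   formulas and Pascal's rule, to D_1(a) times the relations for (i, j+1) and (i+1, j). *)
lemma HS_binom_step:
  fixes phi :: "'k::comm_ring_1 \<Rightarrow> 'a::comm_ring_1"
  assumes H: "HS phi m D" and le: "enat (Suc (Suc (i + j))) \<le> m"
    and IH1: "lowerdiff phi (Suc (i + j))
      (\<lambda>x. D i (D (Suc j) x) - of_nat (Suc (i + j) choose i) * D (Suc (i + j)) x)"
    and IH2: "lowerdiff phi (Suc (i + j))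
      (\<lambda>x. D (Suc i) (D j x) - of_nat (Suc (i + j) choose Suc i) * D (Suc (i + j)) x)"
  shows "lowerdiff phi (Suc (Suc (i + j))) (\<lambda>x. D (Suc i) (D (Suc j) x)
           - of_nat (Suc (Suc (i + j)) choose Suc i) * D (Suc (Suc (i + j))) x)"
proof -
  define n where "n = Suc (i + j)"
  define c where "c = (of_nat (Suc n choose Suc i) :: 'a)"
  have pascal: "c = of_nat (n choose i) + of_nat (n choose Suc i)"
    by (simp add: c_def)
  have comp: "lowerdiff phi n (\<lambda>x. commutator (\<lambda>y. D (Suc i) (D (Suc j) y)) a x
      - D 1 a * (D i (D (Suc j) x) + D (Suc i) (D j x)))" for a
    using HS_commutator_comp[OF H, of i j a] le by (simp add: n_def)
  have lead: "lowerdiff phi n (\<lambda>x. commutator (D (Suc n)) a x - D 1 a * D n x)" for a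
    using HS_commutator_leading[OF H, of n a] le by (simp add: n_def)
  show ?thesis unfolding n_def[symmetric] lowerdiff_Suc_iff
  proof (intro conjI allI)
    show "klin phi (\<lambda>x. D (Suc i) (D (Suc j) x) - of_nat (Suc n choose Suc i) * D (Suc n) x)"
      by (rule klin_diff[OF klin_comp[OF HS_klin[OF H] HS_klin[OF H]] klin_scal[OF HS_klin[OF H]]])
    fix a
    have "commutator (\<lambda>x. D (Suc i) (D (Suc j) x) - c * D (Suc n) x) a =
        (\<lambda>x. (commutator (\<lambda>y. D (Suc i) (D (Suc j) y)) a x
               - D 1 a * (D i (D (Suc j) x) + D (Suc i) (D j x)))
           - c * (commutator (D (Suc n)) a x - D 1 a * D n x)
           + D 1 a * ((D i (D (Suc j) x) - of_nat (n choose i) * D n x)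
                      + (D (Suc i) (D j x) - of_nat (n choose Suc i) * D n x)))"
      by (simp add: pascal algebra_simps)
    then show "lowerdiff phi n
        (commutator (\<lambda>x. D (Suc i) (D (Suc j) x) - of_nat (Suc n choose Suc i) * D (Suc n) x) a)"
      using lowerdiff_add[OF lowerdiff_diff[OF comp lowerdiff_scal[OF lead]]
          lowerdiff_scal[OF lowerdiff_add[OF IH1[folded n_def] IH2[folded n_def]]]]
      by (simp add: c_def)
  qed
qed

lemma HS_binom:
  assumes H: "HS phi m D"
  shows "enat (i + j) \<le> m \<Longrightarrow>
    lowerdiff phi (i + j) (\<lambda>x. D i (D j x) - of_nat ((i + j) choose i) * D (i + j) x)"
proof (induction "i + j" arbitrary: i j)
  case 0 then show ?case using HS_D0[OF H] by simp
next
  case (Suc n)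
  consider "i = 0" | "j = 0" | i' j' where "i = Suc i'" "j = Suc j'"
    by (metis not0_implies_Suc)
  then show ?case
  proof cases
    case 1 then show ?thesis using HS_D0[OF H] lowerdiff_zero by simp
  next
    case 2 then show ?thesis using HS_D0[OF H] lowerdiff_zero by simp
  next
    case 3
    note le = Suc.prems
    have le1: "enat (i' + j) \<le> m" and le2: "enat (i + j') \<le> m"
      using order.trans[OF _ le, of "enat (i' + j)"] order.trans[OF _ le, of "enat (i + j')"] 3
      by simp_all
    have n: "n = Suc (i' + j')" using Suc.hyps(2) 3 by simp
    have IH1: "lowerdiff phi (Suc (i' + j'))
        (\<lambda>x. D i' (D (Suc j') x) - of_nat (Suc (i' + j') choose i') * D (Suc (i' + j')) x)"
      using Suc.hyps(1)[of i' j, OF _ le1] n 3 by simp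
    have IH2: "lowerdiff phi (Suc (i' + j'))
        (\<lambda>x. D (Suc i') (D j' x) - of_nat (Suc (i' + j') choose Suc i') * D (Suc (i' + j')) x)"
      using Suc.hyps(1)[of i j', OF _ le2] n 3 by simp
    show ?thesis using HS_binom_step[OF H _ IH1 IH2] le 3 by simp
  qed
qed

(* Regrouping of a triple convolution sum, needed for the Leibniz rule of a composite. *)
lemma sum_convolution_regroup:
  fixes F :: "nat \<Rightarrow> nat \<Rightarrow> nat \<Rightarrow> nat \<Rightarrow> 'b::comm_monoid_add"
  shows "(\<Sum>i\<le>n. \<Sum>j\<le>n - i. \<Sum>t\<le>i. F t j (i - t) (n - i - j))
       = (\<Sum>r\<le>n. \<Sum>p\<le>r. \<Sum>q\<le>n - r. F p (r - p) q (n - r - q))"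
proof -
  have "(\<Sum>(i, j, t)\<in>(SIGMA i:{..n}. SIGMA j:{..n - i}. {..i}). F t j (i - t) (n - i - j))
      = (\<Sum>(r, p, q)\<in>(SIGMA r:{..n}. SIGMA p:{..r}. {..n - r}). F p (r - p) q (n - r - q))"
    by (rule sum.reindex_bij_witness[where i = "\<lambda>(r, p, q). (p + q, r - p, p)"
          and j = "\<lambda>(i, j, t). (t + j, t, i - t)"]) (auto simp: add.commute)
  then show ?thesis by (simp add: sum.Sigma)
qed

definition compHS :: "enat \<Rightarrow> (nat \<Rightarrow> 'a::comm_ring_1 \<Rightarrow> 'a) \<Rightarrow> (nat \<Rightarrow> 'a \<Rightarrow> 'a) \<Rightarrow> nat \<Rightarrow> 'a \<Rightarrow> 'a" where
  "compHS m D D' = (\<lambda>n x. if enat n \<le> m then (\<Sum>i\<le>n. D i (D' (n - i) x)) else 0)"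

lemma HS_comp:
  assumes H: "HS phi m D" and H': "HS phi m D'"
  shows "HS phi m (compHS m D D')"
  unfolding HS_def
proof (intro conjI allI impI)
  show "compHS m D D' 0 = id"
    by (rule ext) (simp add: compHS_def HS_D0[OF H] HS_D0[OF H'] zero_enat_def[symmetric])
  fix i
  show "m < enat i \<Longrightarrow> compHS m D D' i = (\<lambda>_. 0)" by (auto simp: compHS_def not_le[symmetric])
  assume le: "enat i \<le> m"
  show "klin phi (compHS m D D' i)"
    using le by (simp add: compHS_def klin_sum klin_comp HS_klin[OF H] HS_klin[OF H'])
  fix x y
  have leq: "enat k \<le> m" if "k \<le> i" for k using le that by (meson enat_ord_simps(1) order.trans)
  have expand: "D t (D' (i - t) (x * y))
      = (\<Sum>j\<le>i - t. \<Sum>s\<le>t. D s (D' j x) * D (t - s) (D' (i - t - j) y))" if "t \<le> i" for t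
    using that by (simp add: HS_leibniz[OF H' leq] HS_leibniz[OF H leq] klin_sum_at[OF HS_klin[OF H]])
  have "compHS m D D' i (x * y) = (\<Sum>t\<le>i. \<Sum>j\<le>i - t. \<Sum>s\<le>t. D s (D' j x) * D (t - s) (D' (i - t - j) y))"
    using le expand by (simp add: compHS_def)
  also have "\<dots> = (\<Sum>r\<le>i. \<Sum>p\<le>r. \<Sum>q\<le>i - r. D p (D' (r - p) x) * D q (D' (i - r - q) y))"
    by (rule sum_convolution_regroup)
  also have "\<dots> = (\<Sum>r\<le>i. compHS m D D' r x * compHS m D D' (i - r) y)"
    using leq by (intro sum.cong) (simp_all add: compHS_def sum_product)
  finally show "compHS m D D' i (x * y) = (\<Sum>r\<le>i. compHS m D D' r x * compHS m D D' (i - r) y)" .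
qed

lemma compHS_1:
  "1 \<le> m \<Longrightarrow> HS phi m D \<Longrightarrow> HS phi m D' \<Longrightarrow> compHS m D D' 1 = (\<lambda>x. D 1 x + D' 1 x)"
  by (rule ext) (simp add: compHS_def HS_D0 add.commute one_enat_def)

definition scalHS :: "'a::comm_ring_1 \<Rightarrow> (nat \<Rightarrow> 'a \<Rightarrow> 'a) \<Rightarrow> nat \<Rightarrow> 'a \<Rightarrow> 'a" where
  "scalHS a D = (\<lambda>n x. a ^ n * D n x)"

lemma HS_scal:
  assumes H: "HS phi m D"
  shows "HS phi m (scalHS a D)"
  unfolding HS_def
proof (intro conjI allI impI)
  show "scalHS a D 0 = id" by (rule ext) (simp add: scalHS_def HS_D0[OF H])
  fix i
  show "m < enat i \<Longrightarrow> scalHS a D i = (\<lambda>_. 0)" using HS_vanish[OF H] by (auto simp: scalHS_def not_le)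
  show "klin phi (scalHS a D i)" unfolding scalHS_def by (rule klin_scal[OF HS_klin[OF H]])
  assume le: "enat i \<le> m"
  fix x y
  have "scalHS a D i (x * y) = (\<Sum>r\<le>i. a ^ i * (D r x * D (i - r) y))"
    by (simp add: scalHS_def HS_leibniz[OF H le] sum_distrib_left)
  also have "\<dots> = (\<Sum>r\<le>i. scalHS a D r x * scalHS a D (i - r) y)"
    by (intro sum.cong) (simp_all add: scalHS_def power_add[symmetric] mult_ac)
  finally show "scalHS a D i (x * y) = (\<Sum>r\<le>i. scalHS a D r x * scalHS a D (i - r) y)" .
qed

definition unitHS :: "nat \<Rightarrow> 'a::comm_ring_1 \<Rightarrow> 'a" where
  "unitHS = (\<lambda>i. if i = 0 then id else (\<lambda>_. 0))"

lemma HS_unit: "HS phi m unitHS"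
  unfolding HS_def
proof (intro conjI allI impI)
  show "unitHS 0 = id" by (simp add: unitHS_def)
  fix i
  show "m < enat i \<Longrightarrow> unitHS i = (\<lambda>_. 0)" by (auto simp: unitHS_def zero_enat_def[symmetric])
  show "klin phi (unitHS i)" by (simp add: unitHS_def klin_zero klin_id id_def)
  fix x y
  show "unitHS i (x * y) = (\<Sum>r\<le>i. unitHS r x * unitHS (i - r) y)"
    by (cases "i = 0") (auto simp: unitHS_def intro!: sum.neutral)
qed

lemma SigmaD_unique: "HS phi m D \<Longrightarrow> HS phi m D' \<Longrightarrow> D 1 = D' 1 \<Longrightarrow> SigmaD phi m D = SigmaD phi m D'"
  unfolding SigmaD_def using gr_hom_eq[OF HS_symbol_unique] by metis

lemma SigmaD_EXP:
  assumes H: "HS phi m D"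
  shows "SigmaD phi m D \<in> EXP phi m"
  unfolding EXP_def
proof (intro CollectI conjI allI impI)
  fix i
  show "SigmaD phi m D i \<in> grD phi"
    by (simp add: SigmaD_def gr_hom_grD[OF HS_diffop[OF H]] gr_zero_grD)
  show "m < enat i \<Longrightarrow> SigmaD phi m D i = gr_zero phi"
    by (simp add: SigmaD_def not_le[symmetric])
next
  have "D 0 = id" using HS_D0[OF H] by auto
  then show "SigmaD phi m D 0 = gr_one phi"
    unfolding SigmaD_def gr_hom_def gr_one_def by (intro ext) (simp add: zero_enat_def[symmetric])
next
  fix i j
  assume le: "enat (i + j) \<le> m"
  then have "enat i \<le> m" "enat j \<le> m" by (simp_all add: order.trans[OF _ le])
  then have "gr_mult phi (SigmaD phi m D i) (SigmaD phi m D j) = gr_hom phi (i + j) (\<lambda>x. D i (D j x))"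
    by (simp add: SigmaD_def gr_mult_hom HS_diffop[OF H])
  also have "\<dots> = gr_hom phi (i + j) (\<lambda>x. of_nat ((i + j) choose i) * D (i + j) x)"
    by (rule gr_hom_eq[OF HS_binom[OF H le]])
  also have "\<dots> = gr_nsmul phi ((i + j) choose i) (SigmaD phi m D (i + j))"
    using le by (simp add: SigmaD_def gr_nsmul_hom HS_diffop[OF H])
  finally show "gr_nsmul phi ((i + j) choose i) (SigmaD phi m D (i + j))
      = gr_mult phi (SigmaD phi m D i) (SigmaD phi m D j)" ..
qed

lemma SigmaD_scal: "HS phi m D \<Longrightarrow> SigmaD phi m (scalHS a D) = EXP_scal phi a (SigmaD phi m D)"
  unfolding SigmaD_def EXP_scal_def scalHS_def
  by (auto simp: gr_scal_hom HS_diffop gr_scal_zero)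

lemma SigmaD_comp:
  assumes H: "HS phi m D" and H': "HS phi m D'"
  shows "SigmaD phi m (compHS m D D') = EXP_add phi m (SigmaD phi m D) (SigmaD phi m D')"
proof (intro ext)
  fix n l
  show "SigmaD phi m (compHS m D D') n l = EXP_add phi m (SigmaD phi m D) (SigmaD phi m D') n l"
  proof (cases "enat n \<le> m")
    case False then show ?thesis by (simp add: SigmaD_def EXP_add_def)
  next
    case le: True
    define P where "P = (\<lambda>i x. D i (D' (n - i) x))"
    have dP: "diffop phi n (P i)" if "i \<le> n" for i
      using diffop_comp[OF HS_diffop[OF H, of i] HS_diffop[OF H', of "n - i"]] that
      by (simp add: P_def)
    have "gr_mult phi (SigmaD phi m D i) (SigmaD phi m D' (n - i)) = gr_hom phi n (P i)"
      if "i \<le> n" for i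
      using that order.trans[OF _ le, of "enat i"] order.trans[OF _ le, of "enat (n - i)"]
      by (simp add: SigmaD_def P_def gr_mult_hom HS_diffop[OF H] HS_diffop[OF H'])
    then have "EXP_add phi m (SigmaD phi m D) (SigmaD phi m D') n l
        = sym phi l (\<lambda>x. \<Sum>i\<le>n. rep (gr_hom phi n (P i) l) x)"
      using le by (simp add: EXP_add_def)
    also have "\<dots> = sym phi l (\<lambda>x. \<Sum>i\<le>n. (if l = n then P i else (\<lambda>_. 0)) x)"
      by (rule sym_sum_congr) (use rep_gr_hom[OF dP] in auto)
    also have "\<dots> = SigmaD phi m (compHS m D D') n l"
      using le by (simp add: SigmaD_def gr_hom_apply compHS_def P_def if_distrib[of "\<lambda>f. f _"] cong: if_cong)
    finally show ?thesis ..
  qed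
qed

definition chi :: "('k::comm_ring_1 \<Rightarrow> 'a::comm_ring_1) \<Rightarrow> enat \<Rightarrow> ('a \<Rightarrow> 'a) \<Rightarrow> (nat \<Rightarrow> 'a grd)" where
  "chi phi m \<delta> = SigmaD phi m (SOME D. HS phi m D \<and> D 1 = \<delta>)"

lemma chi_SigmaD: "HS phi m D \<Longrightarrow> chi phi m (D 1) = SigmaD phi m D"
proof -
  assume H: "HS phi m D"
  then have "\<exists>E. HS phi m E \<and> E 1 = D 1" by blast
  then have "HS phi m (SOME E. HS phi m E \<and> E 1 = D 1) \<and> (SOME E. HS phi m E \<and> E 1 = D 1) 1 = D 1"
    by (rule someI_ex)
  then show ?thesis unfolding chi_def using SigmaD_unique H by blast
qed

lemma zero_in_Ider: "(\<lambda>_. 0) \<in> Ider phi m"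
  using HS_unit unfolding Ider_def by (force simp: unitHS_def)

lemma chi_EXP:
  assumes "\<delta> \<in> Ider phi m"
  shows "chi phi m \<delta> \<in> EXP phi m"
proof -
  obtain D where "HS phi m D" "D 1 = \<delta>" using assms by (auto simp: Ider_def)
  then show ?thesis using chi_SigmaD SigmaD_EXP by metis
qed

lemma chi_add:
  assumes "1 \<le> m" and "\<delta> \<in> Ider phi m" and "\<delta>' \<in> Ider phi m"
  shows "(\<lambda>x. \<delta> x + \<delta>' x) \<in> Ider phi m
    \<and> chi phi m (\<lambda>x. \<delta> x + \<delta>' x) = EXP_add phi m (chi phi m \<delta>) (chi phi m \<delta>')"
proof
  obtain D D' where H: "HS phi m D" "D 1 = \<delta>" and H': "HS phi m D'" "D' 1 = \<delta>'"
    using assms(2,3) by (auto simp: Ider_def)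
  have C: "HS phi m (compHS m D D')" and C1: "compHS m D D' 1 = (\<lambda>x. \<delta> x + \<delta>' x)"
    using HS_comp[OF H(1) H'(1)] compHS_1[OF assms(1) H(1) H'(1)] H(2) H'(2) by simp_all
  then show "(\<lambda>x. \<delta> x + \<delta>' x) \<in> Ider phi m"
    unfolding Ider_def by blast
  have "chi phi m (\<lambda>x. \<delta> x + \<delta>' x) = SigmaD phi m (compHS m D D')"
    using chi_SigmaD[OF C] C1 by simp
  also have "\<dots> = EXP_add phi m (SigmaD phi m D) (SigmaD phi m D')"
    by (rule SigmaD_comp[OF H(1) H'(1)])
  also have "\<dots> = EXP_add phi m (chi phi m \<delta>) (chi phi m \<delta>')"
    using chi_SigmaD[OF H(1)] chi_SigmaD[OF H'(1)] H(2) H'(2) by simp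
  finally show "chi phi m (\<lambda>x. \<delta> x + \<delta>' x) = EXP_add phi m (chi phi m \<delta>) (chi phi m \<delta>')" .
qed

lemma chi_scal:
  assumes "\<delta> \<in> Ider phi m"
  shows "(\<lambda>x. a * \<delta> x) \<in> Ider phi m \<and> chi phi m (\<lambda>x. a * \<delta> x) = EXP_scal phi a (chi phi m \<delta>)"
proof
  obtain D where H: "HS phi m D" "D 1 = \<delta>" using assms by (auto simp: Ider_def)
  have S: "HS phi m (scalHS a D)" and S1: "scalHS a D 1 = (\<lambda>x. a * \<delta> x)"
    using HS_scal[OF H(1)] H(2) by (simp_all add: scalHS_def)
  then show "(\<lambda>x. a * \<delta> x) \<in> Ider phi m"
    unfolding Ider_def by blast
  have "chi phi m (\<lambda>x. a * \<delta> x) = SigmaD phi m (scalHS a D)"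
    using chi_SigmaD[OF S] S1 by simp
  also have "\<dots> = EXP_scal phi a (chi phi m \<delta>)"
    using SigmaD_scal[OF H(1)] chi_SigmaD[OF H(1)] H(2) by simp
  finally show "chi phi m (\<lambda>x. a * \<delta> x) = EXP_scal phi a (chi phi m \<delta>)" .
qed

(* Main theorem: chi_m is a well-defined A-linear map Ider(A;m) -> EXP_m(gr Diff)
   with chi_m(D_1) = Sigma_m(D). *)
theorem mainTheorem9:
  fixes phi :: "'k::comm_ring_1 \<Rightarrow> 'a::comm_ring_1" and m :: enat
  assumes "ring_hom_map phi" and "1 \<le> m"
  shows "\<exists>\<chi> :: ('a \<Rightarrow> 'a) \<Rightarrow> (nat \<Rightarrow> 'a grd).
           (\<forall>\<delta>\<in>Ider phi m. \<forall>D. HS phi m D \<and> D 1 = \<delta> \<longrightarrow> \<chi> \<delta> = SigmaD phi m D)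
         \<and> (\<forall>\<delta>\<in>Ider phi m. \<chi> \<delta> \<in> EXP phi m)
         \<and> (\<lambda>_. 0) \<in> Ider phi m
         \<and> (\<forall>\<delta>\<in>Ider phi m. \<forall>\<delta>'\<in>Ider phi m.
              (\<lambda>x. \<delta> x + \<delta>' x) \<in> Ider phi m
              \<and> \<chi> (\<lambda>x. \<delta> x + \<delta>' x) = EXP_add phi m (\<chi> \<delta>) (\<chi> \<delta>'))
         \<and> (\<forall>a. \<forall>\<delta>\<in>Ider phi m.
              (\<lambda>x. a * \<delta> x) \<in> Ider phi m
              \<and> \<chi> (\<lambda>x. a * \<delta> x) = EXP_scal phi a (\<chi> \<delta>))"
proof (intro exI[of _ "chi phi m"] conjI ballI allI impI)
  show "chi phi m \<delta> = SigmaD phi m D" if "HS phi m D \<and> D 1 = \<delta>" for \<delta> D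
    using that chi_SigmaD by blast
qed (use zero_in_Ider chi_EXP chi_add[OF assms(2)] chi_scal in blast)+

end
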